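(* Let $K$ be a field of characteristic $p>3$, let $n\ge1$, let $O_n=K[x_1,\dots,x_n]/(x_1^p,\dots,x_n^p)$, let $W_n=\operatorname{Der}(O_n)$, let $D$ be a Lie subalgebra of $W_n$ such that $O_n$ has no $D$-invariant ideals other than $0$ and $O_n$, and let $S$ be a finite-dimensional simple Lie algebra over $K$. Consider the Lie algebra $(S\otimes O_n)\oplus D$ with brackets $[x\otimes f,y\otimes g]=[x,y]\otimes fg$, $[d,x\otimes f]=x\otimes d(f)$, and the bracket of $D$, for $x,y\in S$, $f,g\in O_n$, $d\in D$. Then $Z^2_{comm}((S\otimes O_n)\oplus D)\cong Z^2_{comm}(D)$.
   Context: For a Lie algebra $\mathfrak L$ over $K$, $Z^2_{comm}(\mathfrak L)$ denotes the vector space of commutative $2$-cocycles, i.e. symmetric bilinear forms $\varphi:\mathfrak L\times\mathfrak L\to K$ with $\varphi([x,y],z)+\varphi([z,x],y)+\varphi([y,z],x)=0$ for all $x,y,z\in\mathfrak L$. *)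

theory Defs
  imports "HOL.Vector_Spaces"
begin

definition lie_algebra ::
  "('k::field \<Rightarrow> 's::ab_group_add \<Rightarrow> 's) \<Rightarrow> ('s \<Rightarrow> 's \<Rightarrow> 's) \<Rightarrow> bool" where
  "lie_algebra sm br \<longleftrightarrow> vector_space sm \<and>
     (\<forall>x y z. br (x + y) z = br x z + br y z) \<and>
     (\<forall>x y z. br x (y + z) = br x y + br x z) \<and>
     (\<forall>c x y. br (sm c x) y = sm c (br x y)) \<and>
     (\<forall>c x y. br x (sm c y) = sm c (br x y)) \<and>
     (\<forall>x. br x x = 0) \<and>
     (\<forall>x y z. br x (br y z) + br y (br z x) + br z (br x y) = 0)"

definition lie_ideal ::
  "('k::field \<Rightarrow> 's::ab_group_add \<Rightarrow> 's) \<Rightarrow> ('s \<Rightarrow> 's \<Rightarrow> 's) \<Rightarrow> 's set \<Rightarrow> bool" where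
  "lie_ideal sm br I \<longleftrightarrow> 0 \<in> I \<and> (\<forall>x\<in>I. \<forall>y\<in>I. x + y \<in> I) \<and>
     (\<forall>c. \<forall>x\<in>I. sm c x \<in> I) \<and> (\<forall>x\<in>I. \<forall>y. br y x \<in> I)"

definition finite_dim ::
  "('k::field \<Rightarrow> 's::ab_group_add \<Rightarrow> 's) \<Rightarrow> bool" where
  "finite_dim sm \<longleftrightarrow> (\<exists>B. finite B \<and> (\<forall>x. \<exists>c. x = (\<Sum>b\<in>B. sm (c b) b)))"

definition simple_lie_algebra ::
  "('k::field \<Rightarrow> 's::ab_group_add \<Rightarrow> 's) \<Rightarrow> ('s \<Rightarrow> 's \<Rightarrow> 's) \<Rightarrow> bool" where
  "simple_lie_algebra sm br \<longleftrightarrow> lie_algebra sm br \<and> (\<exists>x y. br x y \<noteq> 0) \<and>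
     (\<forall>I. lie_ideal sm br I \<longrightarrow> I = {0} \<or> I = UNIV)"

text \<open>Elements are coefficient functions on the monomial basis x^\<alpha>, 
  \<alpha> an exponent vector with 0 \<le> \<alpha> i < p for i < n and \<alpha> i = 0 for i \<ge> n.\<close>

definition Mon :: "nat \<Rightarrow> nat \<Rightarrow> (nat \<Rightarrow> nat) set" where
  "Mon n p = {\<alpha>. (\<forall>i<n. \<alpha> i < p) \<and> (\<forall>i\<ge>n. \<alpha> i = 0)}"

definition On :: "nat \<Rightarrow> nat \<Rightarrow> ((nat \<Rightarrow> nat) \<Rightarrow> 'k::field) set" where
  "On n p = {f. \<forall>\<alpha>. \<alpha> \<notin> Mon n p \<longrightarrow> f \<alpha> = 0}"

definition On_zero :: "(nat \<Rightarrow> nat) \<Rightarrow> 'k::field" where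
  "On_zero = (\<lambda>\<alpha>. 0)"

definition On_add :: "((nat \<Rightarrow> nat) \<Rightarrow> 'k::field) \<Rightarrow> ((nat \<Rightarrow> nat) \<Rightarrow> 'k) \<Rightarrow> (nat \<Rightarrow> nat) \<Rightarrow> 'k" where
  "On_add f g = (\<lambda>\<alpha>. f \<alpha> + g \<alpha>)"

definition On_scale :: "'k::field \<Rightarrow> ((nat \<Rightarrow> nat) \<Rightarrow> 'k) \<Rightarrow> (nat \<Rightarrow> nat) \<Rightarrow> 'k" where
  "On_scale c f = (\<lambda>\<alpha>. c * f \<alpha>)"

definition mon_pairs :: "nat \<Rightarrow> nat \<Rightarrow> (nat \<Rightarrow> nat) \<Rightarrow> ((nat \<Rightarrow> nat) \<times> (nat \<Rightarrow> nat)) set" where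
  "mon_pairs n p \<gamma> = {(\<alpha>, \<beta>). \<alpha> \<in> Mon n p \<and> \<beta> \<in> Mon n p \<and> (\<lambda>i. \<alpha> i + \<beta> i) = \<gamma>}"

definition On_mult :: "nat \<Rightarrow> nat \<Rightarrow> ((nat \<Rightarrow> nat) \<Rightarrow> 'k::field) \<Rightarrow> ((nat \<Rightarrow> nat) \<Rightarrow> 'k) \<Rightarrow> (nat \<Rightarrow> nat) \<Rightarrow> 'k" where
  "On_mult n p f g = (\<lambda>\<gamma>. if \<gamma> \<in> Mon n p
      then (\<Sum>(\<alpha>, \<beta>)\<in>mon_pairs n p \<gamma>. f \<alpha> * g \<beta>) else 0)"

definition monom_basis :: "(nat \<Rightarrow> nat) \<Rightarrow> (nat \<Rightarrow> nat) \<Rightarrow> 'k::field" where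
  "monom_basis \<alpha> = (\<lambda>\<beta>. if \<beta> = \<alpha> then 1 else 0)"

definition On_ideal :: "nat \<Rightarrow> nat \<Rightarrow> ((nat \<Rightarrow> nat) \<Rightarrow> 'k::field) set \<Rightarrow> bool" where
  "On_ideal n p I \<longleftrightarrow> I \<subseteq> On n p \<and> On_zero \<in> I \<and>
     (\<forall>f\<in>I. \<forall>g\<in>I. On_add f g \<in> I) \<and>
     (\<forall>f\<in>On n p. \<forall>g\<in>I. On_mult n p f g \<in> I)"

text \<open>Derivations are K-linear maps O_n \<rightarrow> O_n satisfying the Leibniz rule;
  to make them unique as HOL functions they send everything outside O_n to 0.\<close>
definition Der :: "nat \<Rightarrow> nat \<Rightarrow>
   (((nat \<Rightarrow> nat) \<Rightarrow> 'k::field) \<Rightarrow> ((nat \<Rightarrow> nat) \<Rightarrow> 'k)) set" where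
  "Der n p = {d. (\<forall>f. f \<notin> On n p \<longrightarrow> d f = On_zero) \<and>
     (\<forall>f\<in>On n p. d f \<in> On n p) \<and>
     (\<forall>f\<in>On n p. \<forall>g\<in>On n p. d (On_add f g) = On_add (d f) (d g)) \<and>
     (\<forall>c. \<forall>f\<in>On n p. d (On_scale c f) = On_scale c (d f)) \<and>
     (\<forall>f\<in>On n p. \<forall>g\<in>On n p.
        d (On_mult n p f g) = On_add (On_mult n p (d f) g) (On_mult n p f (d g)))}"

definition der_add where "der_add d e = (\<lambda>f. On_add (d f) (e f))"
definition der_scale where "der_scale c d = (\<lambda>f. On_scale c (d f))"
definition der_zero :: "((nat \<Rightarrow> nat) \<Rightarrow> 'k::field) \<Rightarrow> ((nat \<Rightarrow> nat) \<Rightarrow> 'k)" where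
  "der_zero = (\<lambda>f. On_zero)"
definition der_br :: "(((nat \<Rightarrow> nat) \<Rightarrow> 'k::field) \<Rightarrow> ((nat \<Rightarrow> nat) \<Rightarrow> 'k)) \<Rightarrow>
   (((nat \<Rightarrow> nat) \<Rightarrow> 'k) \<Rightarrow> ((nat \<Rightarrow> nat) \<Rightarrow> 'k)) \<Rightarrow>
   ((nat \<Rightarrow> nat) \<Rightarrow> 'k) \<Rightarrow> ((nat \<Rightarrow> nat) \<Rightarrow> 'k)" where
  "der_br d e = (\<lambda>f \<alpha>. d (e f) \<alpha> - e (d f) \<alpha>)"

definition lie_subalgebra_Wn :: "nat \<Rightarrow> nat \<Rightarrow>
   (((nat \<Rightarrow> nat) \<Rightarrow> 'k::field) \<Rightarrow> ((nat \<Rightarrow> nat) \<Rightarrow> 'k)) set \<Rightarrow> bool" where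
  "lie_subalgebra_Wn n p D \<longleftrightarrow> D \<subseteq> Der n p \<and> der_zero \<in> D \<and>
     (\<forall>d\<in>D. \<forall>e\<in>D. der_add d e \<in> D) \<and> (\<forall>c. \<forall>d\<in>D. der_scale c d \<in> D) \<and>
     (\<forall>d\<in>D. \<forall>e\<in>D. der_br d e \<in> D)"

definition On_D_simple :: "nat \<Rightarrow> nat \<Rightarrow>
   (((nat \<Rightarrow> nat) \<Rightarrow> 'k::field) \<Rightarrow> ((nat \<Rightarrow> nat) \<Rightarrow> 'k)) set \<Rightarrow> bool" where
  "On_D_simple n p D \<longleftrightarrow> (\<forall>I. On_ideal n p I \<and> (\<forall>d\<in>D. \<forall>f\<in>I. d f \<in> I) \<longrightarrow>
      I = {On_zero} \<or> I = On n p)"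

section \<open>The current algebra S \<otimes> O_n, realised via the monomial basis of O_n:
  an element \<Sum>_\<alpha> s_\<alpha> \<otimes> x^\<alpha> is the function \<alpha> \<mapsto> s_\<alpha>\<close>

definition SO :: "nat \<Rightarrow> nat \<Rightarrow> ((nat \<Rightarrow> nat) \<Rightarrow> 's::ab_group_add) set" where
  "SO n p = {F. \<forall>\<alpha>. \<alpha> \<notin> Mon n p \<longrightarrow> F \<alpha> = 0}"

text \<open>[x \<otimes> f, y \<otimes> g] = [x,y] \<otimes> fg\<close>
definition SO_br :: "nat \<Rightarrow> nat \<Rightarrow> ('s::ab_group_add \<Rightarrow> 's \<Rightarrow> 's) \<Rightarrow>
   ((nat \<Rightarrow> nat) \<Rightarrow> 's) \<Rightarrow> ((nat \<Rightarrow> nat) \<Rightarrow> 's) \<Rightarrow> (nat \<Rightarrow> nat) \<Rightarrow> 's" where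
  "SO_br n p br F G = (\<lambda>\<gamma>. if \<gamma> \<in> Mon n p
      then (\<Sum>(\<alpha>, \<beta>)\<in>mon_pairs n p \<gamma>. br (F \<alpha>) (G \<beta>)) else 0)"

text \<open>[d, x \<otimes> f] = x \<otimes> d(f)\<close>
definition SO_act :: "nat \<Rightarrow> nat \<Rightarrow> ('k::field \<Rightarrow> 's::ab_group_add \<Rightarrow> 's) \<Rightarrow>
   (((nat \<Rightarrow> nat) \<Rightarrow> 'k) \<Rightarrow> ((nat \<Rightarrow> nat) \<Rightarrow> 'k)) \<Rightarrow>
   ((nat \<Rightarrow> nat) \<Rightarrow> 's) \<Rightarrow> (nat \<Rightarrow> nat) \<Rightarrow> 's" where
  "SO_act n p sm d F = (\<lambda>\<gamma>. \<Sum>\<alpha>\<in>Mon n p. sm (d (monom_basis \<alpha>) \<gamma>) (F \<alpha>))"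

type_synonym ('k, 's) Lelem =
  "((nat \<Rightarrow> nat) \<Rightarrow> 's) \<times> (((nat \<Rightarrow> nat) \<Rightarrow> 'k) \<Rightarrow> ((nat \<Rightarrow> nat) \<Rightarrow> 'k))"

definition L_carrier :: "nat \<Rightarrow> nat \<Rightarrow>
   (((nat \<Rightarrow> nat) \<Rightarrow> 'k::field) \<Rightarrow> ((nat \<Rightarrow> nat) \<Rightarrow> 'k)) set \<Rightarrow>
   ('k, 's::ab_group_add) Lelem set" where
  "L_carrier n p D = SO n p \<times> D"

definition L_add :: "('k::field, 's::ab_group_add) Lelem \<Rightarrow> ('k, 's) Lelem \<Rightarrow> ('k, 's) Lelem" where
  "L_add X Y = ((\<lambda>\<alpha>. fst X \<alpha> + fst Y \<alpha>), der_add (snd X) (snd Y))"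

definition L_scale :: "('k::field \<Rightarrow> 's::ab_group_add \<Rightarrow> 's) \<Rightarrow> 'k \<Rightarrow> ('k, 's) Lelem \<Rightarrow> ('k, 's) Lelem" where
  "L_scale sm c X = ((\<lambda>\<alpha>. sm c (fst X \<alpha>)), der_scale c (snd X))"

definition L_br :: "nat \<Rightarrow> nat \<Rightarrow> ('k::field \<Rightarrow> 's::ab_group_add \<Rightarrow> 's) \<Rightarrow> ('s \<Rightarrow> 's \<Rightarrow> 's) \<Rightarrow>
   ('k, 's) Lelem \<Rightarrow> ('k, 's) Lelem \<Rightarrow> ('k, 's) Lelem" where
  "L_br n p sm br X Y =
     ((\<lambda>\<gamma>. SO_br n p br (fst X) (fst Y) \<gamma> + SO_act n p sm (snd X) (fst Y) \<gamma>
            - SO_act n p sm (snd Y) (fst X) \<gamma>),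
      der_br (snd X) (snd Y))"

text \<open>Symmetric bilinear forms \<phi> on the carrier with
  \<phi>([x,y],z) + \<phi>([z,x],y) + \<phi>([y,z],x) = 0; forms vanish outside the carrier
  so that they are determined by their values on it.\<close>
definition Z2comm :: "'a set \<Rightarrow> ('a \<Rightarrow> 'a \<Rightarrow> 'a) \<Rightarrow> ('k::field \<Rightarrow> 'a \<Rightarrow> 'a) \<Rightarrow>
   ('a \<Rightarrow> 'a \<Rightarrow> 'a) \<Rightarrow> ('a \<Rightarrow> 'a \<Rightarrow> 'k) set" where
  "Z2comm C add sc br = {\<phi>.
     (\<forall>x y. x \<notin> C \<or> y \<notin> C \<longrightarrow> \<phi> x y = 0) \<and>
     (\<forall>x\<in>C. \<forall>y\<in>C. \<phi> x y = \<phi> y x) \<and>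
     (\<forall>x\<in>C. \<forall>y\<in>C. \<forall>z\<in>C. \<phi> (add x y) z = \<phi> x z + \<phi> y z) \<and>
     (\<forall>c. \<forall>x\<in>C. \<forall>z\<in>C. \<phi> (sc c x) z = c * \<phi> x z) \<and>
     (\<forall>x\<in>C. \<forall>y\<in>C. \<forall>z\<in>C. \<phi> (br x y) z + \<phi> (br z x) y + \<phi> (br y z) x = 0)}"

definition forms_iso :: "('a \<Rightarrow> 'a \<Rightarrow> 'k::field) set \<Rightarrow> ('b \<Rightarrow> 'b \<Rightarrow> 'k) set \<Rightarrow> bool" where
  "forms_iso A B \<longleftrightarrow> (\<exists>\<Phi>. bij_betw \<Phi> A B \<and>
     (\<forall>\<phi>\<in>A. \<forall>\<psi>\<in>A. \<Phi> (\<lambda>x y. \<phi> x y + \<psi> x y) = (\<lambda>x y. \<Phi> \<phi> x y + \<Phi> \<psi> x y)) \<and>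
     (\<forall>c. \<forall>\<phi>\<in>A. \<Phi> (\<lambda>x y. c * \<phi> x y) = (\<lambda>x y. c * \<Phi> \<phi> x y)))"

end

theory Submission
  imports Defs
begin

text \<open>Let \<open>\<phi>\<close> be a commutative 2-cocycle on \<open>L = (S \<otimes> O\<^sub>n) \<oplus> D\<close>. Feeding triples built from
  \<open>S \<otimes> 1\<close>, \<open>S \<otimes> O\<^sub>n\<close> and \<open>D\<close> into the cocycle identity, and using that \<open>S\<close> is perfect and
  \<open>char K \<noteq> 2\<close>, one finds in turn: \<open>\<phi>(S \<otimes> d f, S \<otimes> 1) = 0\<close> and \<open>\<phi>(S \<otimes> O\<^sub>n, D) = 0\<close>; every
  \<open>d \<in> D\<close> is self-adjoint for \<open>\<phi>\<close> on \<open>S \<otimes> O\<^sub>n\<close>; the \<open>g\<close> with \<open>\<phi>(S \<otimes> g O\<^sub>n, S \<otimes> 1) = 0\<close> form an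
  ideal of \<open>O\<^sub>n\<close> containing \<open>D(O\<^sub>n)\<close>, which by \<open>D\<close>-simplicity is all of \<open>O\<^sub>n\<close>. Then \<open>ad S\<close> is
  self-adjoint for \<open>\<phi>\<close> on \<open>S \<otimes> f \<times> S \<otimes> g\<close>, which forces \<open>\<phi>\<close> to vanish there. So \<open>\<phi>\<close> kills
  \<open>S \<otimes> O\<^sub>n\<close> and is the pullback of its restriction to \<open>D\<close> along the projection \<open>L \<rightarrow> D\<close>.\<close>

section \<open>The truncated polynomial algebra\<close>

definition zero_exponent :: "nat \<Rightarrow> nat" where
  "zero_exponent = (\<lambda>i. 0)"

abbreviation On_one :: "(nat \<Rightarrow> nat) \<Rightarrow> 'k::field" where
  "On_one \<equiv> monom_basis zero_exponent"

lemma mon_pairs_iff: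
  "(\<alpha>, \<beta>) \<in> mon_pairs n p \<gamma> \<longleftrightarrow> \<alpha> \<in> Mon n p \<and> \<beta> \<in> Mon n p \<and> (\<lambda>i. \<alpha> i + \<beta> i) = \<gamma>"
  by (simp add: mon_pairs_def)

lemma finite_Mon: "finite (Mon n p)"
proof (rule finite_subset)
  show "Mon n p \<subseteq> {\<alpha>. \<forall>i. (i \<in> {..<n} \<longrightarrow> \<alpha> i \<in> {..<p}) \<and> (i \<notin> {..<n} \<longrightarrow> \<alpha> i = 0)}"
    by (auto simp: Mon_def)
qed (intro finite_set_of_finite_funs finite_lessThan)

lemma finite_mon_pairs: "finite (mon_pairs n p \<gamma>)"
  by (rule finite_subset[of _ "Mon n p \<times> Mon n p"]) (auto simp: mon_pairs_def finite_Mon)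

lemma Mon_if_le: "\<gamma> \<in> Mon n p \<Longrightarrow> (\<And>i. \<alpha> i \<le> \<gamma> i) \<Longrightarrow> \<alpha> \<in> Mon n p"
  unfolding Mon_def by (auto intro: le_less_trans) (metis le_zero_eq)

lemma zero_exponent_Mon: "0 < p \<Longrightarrow> zero_exponent \<in> Mon n p"
  by (simp add: Mon_def zero_exponent_def)

lemma mon_pairs_zero_exponent: "0 < p \<Longrightarrow> mon_pairs n p zero_exponent = {(zero_exponent, zero_exponent)}"
  by (auto simp: mon_pairs_iff zero_exponent_Mon) (auto simp: zero_exponent_def fun_eq_iff)

lemma monom_basis_On: "\<alpha> \<in> Mon n p \<Longrightarrow> monom_basis \<alpha> \<in> On n p"
  by (auto simp: On_def monom_basis_def)

lemma On_one_On: "0 < p \<Longrightarrow> On_one \<in> On n p"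
  by (intro monom_basis_On zero_exponent_Mon)

lemma On_zero_On: "On_zero \<in> On n p"
  by (simp add: On_def On_zero_def)

lemma On_add_On: "f \<in> On n p \<Longrightarrow> g \<in> On n p \<Longrightarrow> On_add f g \<in> On n p"
  by (simp add: On_def On_add_def)

lemma On_scale_On: "f \<in> On n p \<Longrightarrow> On_scale c f \<in> On n p"
  by (simp add: On_def On_scale_def)

lemma On_mult_On: "On_mult n p f g \<in> On n p"
  by (simp add: On_def On_mult_def)

lemma On_mult_comm: "On_mult n p f g = On_mult n p g f"
proof
  fix \<gamma>
  have "(\<Sum>(\<alpha>, \<beta>)\<in>mon_pairs n p \<gamma>. f \<alpha> * g \<beta>) = (\<Sum>(\<alpha>, \<beta>)\<in>mon_pairs n p \<gamma>. g \<alpha> * f \<beta>)"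
    by (rule sum.reindex_bij_witness[where i="\<lambda>(a, b). (b, a)" and j="\<lambda>(a, b). (b, a)"])
       (auto simp: mon_pairs_iff add.commute mult.commute)
  then show "On_mult n p f g \<gamma> = On_mult n p g f \<gamma>"
    by (simp add: On_mult_def)
qed

lemma On_mult_one: assumes "f \<in> On n p" "0 < p" shows "On_mult n p f On_one = f"
proof
  fix \<gamma>
  show "On_mult n p f On_one \<gamma> = f \<gamma>"
  proof (cases "\<gamma> \<in> Mon n p")
    case True
    have "(\<Sum>(\<alpha>, \<beta>)\<in>mon_pairs n p \<gamma>. f \<alpha> * On_one \<beta>)
        = (\<Sum>x\<in>mon_pairs n p \<gamma>. if x = (\<gamma>, zero_exponent) then f \<gamma> else 0)"
      by (rule sum.cong) (auto simp: mon_pairs_iff monom_basis_def zero_exponent_def fun_eq_iff split: if_split_asm)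
    also have "\<dots> = f \<gamma>"
      using True zero_exponent_Mon[OF assms(2)]
      by (simp add: finite_mon_pairs mon_pairs_iff zero_exponent_def)
    finally show ?thesis
      using True by (simp add: On_mult_def)
  qed (use assms in \<open>simp add: On_mult_def On_def\<close>)
qed

lemma On_mult_one_left: "f \<in> On n p \<Longrightarrow> 0 < p \<Longrightarrow> On_mult n p On_one f = f"
  using On_mult_one On_mult_comm by metis

lemma On_mult_zero_left: "On_mult n p On_zero f = On_zero"
  by (simp add: On_mult_def On_zero_def fun_eq_iff)

lemma On_mult_add_left: "On_mult n p (On_add f g) h = On_add (On_mult n p f h) (On_mult n p g h)"
  by (simp add: On_mult_def On_add_def fun_eq_iff case_prod_beta distrib_right sum.distrib)

lemma On_mult_mult_eq_triple_sum:
  assumes "\<gamma> \<in> Mon n p"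
  shows "On_mult n p (On_mult n p f g) h \<gamma> =
    (\<Sum>(a, b, c)\<in>{(a, b, c). a \<in> Mon n p \<and> b \<in> Mon n p \<and> c \<in> Mon n p \<and> (\<lambda>i. a i + b i + c i) = \<gamma>}.
       f a * g b * h c)"
proof -
  let ?P = "mon_pairs n p"
  have "On_mult n p (On_mult n p f g) h \<gamma> =
      (\<Sum>x\<in>?P \<gamma>. \<Sum>y\<in>?P (fst x). f (fst y) * g (snd y) * h (snd x))"
    using assms
    by (auto simp: On_mult_def mon_pairs_iff sum_distrib_right case_prod_beta intro!: sum.cong)
  also have "\<dots> = (\<Sum>(x, y)\<in>Sigma (?P \<gamma>) (\<lambda>x. ?P (fst x)). f (fst y) * g (snd y) * h (snd x))"
    by (rule sum.Sigma) (auto simp: finite_mon_pairs)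
  also have "\<dots> = (\<Sum>(a, b, c)\<in>{(a, b, c). a \<in> Mon n p \<and> b \<in> Mon n p \<and> c \<in> Mon n p \<and> (\<lambda>i. a i + b i + c i) = \<gamma>}.
       f a * g b * h c)"
  proof (rule sum.reindex_bij_witness[where i="\<lambda>(a, b, c). (((\<lambda>i. a i + b i), c), (a, b))"
        and j="\<lambda>((\<delta>, c), (a, b)). (a, b, c)"])
    fix abc assume "abc \<in> {(a, b, c). a \<in> Mon n p \<and> b \<in> Mon n p \<and> c \<in> Mon n p \<and> (\<lambda>i. a i + b i + c i) = \<gamma>}"
    then obtain a b c where abc: "abc = (a, b, c)" "a \<in> Mon n p" "b \<in> Mon n p" "c \<in> Mon n p"
      "(\<lambda>i. a i + b i + c i) = \<gamma>" by auto
    have "(\<lambda>i. a i + b i) \<in> Mon n p"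
      by (rule Mon_if_le[OF assms]) (use abc(5) in auto)
    then show "(case abc of (a, b, c) \<Rightarrow> (((\<lambda>i. a i + b i), c), (a, b))) \<in> Sigma (?P \<gamma>) (\<lambda>x. ?P (fst x))"
      using abc by (simp add: mon_pairs_iff)
  qed (auto simp: mon_pairs_iff)
  finally show ?thesis .
qed

lemma On_mult_assoc: "On_mult n p (On_mult n p f g) h = On_mult n p f (On_mult n p g h)"
proof
  fix \<gamma>
  let ?T = "{(a, b, c). a \<in> Mon n p \<and> b \<in> Mon n p \<and> c \<in> Mon n p \<and> (\<lambda>i. a i + b i + c i) = \<gamma>}"
  show "On_mult n p (On_mult n p f g) h \<gamma> = On_mult n p f (On_mult n p g h) \<gamma>"
  proof (cases "\<gamma> \<in> Mon n p")
    case True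
    have "On_mult n p f (On_mult n p g h) \<gamma> = On_mult n p (On_mult n p h g) f \<gamma>"
      by (metis On_mult_comm)
    also have "\<dots> = (\<Sum>(a, b, c)\<in>?T. h a * g b * f c)"
      by (rule On_mult_mult_eq_triple_sum[OF True])
    also have "\<dots> = (\<Sum>(a, b, c)\<in>?T. f a * g b * h c)"
      by (rule sum.reindex_bij_witness[where i="\<lambda>(a, b, c). (c, b, a)" and j="\<lambda>(a, b, c). (c, b, a)"])
         (auto simp: add.commute add.left_commute mult.commute mult.left_commute)
    finally show ?thesis
      using On_mult_mult_eq_triple_sum[OF True] by simp
  qed (simp add: On_mult_def)
qed

section \<open>Derivations of the truncated polynomial algebra\<close>

lemma Der_On: "d \<in> Der n p \<Longrightarrow> d f \<in> On n p"
  by (cases "f \<in> On n p") (auto simp: Der_def On_zero_On)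

lemma Der_add: "d \<in> Der n p \<Longrightarrow> f \<in> On n p \<Longrightarrow> g \<in> On n p \<Longrightarrow> d (On_add f g) = On_add (d f) (d g)"
  by (simp add: Der_def)

lemma Der_scale: "d \<in> Der n p \<Longrightarrow> f \<in> On n p \<Longrightarrow> d (On_scale c f) = On_scale c (d f)"
  by (simp add: Der_def)

lemma Der_mult: "d \<in> Der n p \<Longrightarrow> f \<in> On n p \<Longrightarrow> g \<in> On n p \<Longrightarrow>
    d (On_mult n p f g) = On_add (On_mult n p (d f) g) (On_mult n p f (d g))"
  by (simp add: Der_def)

lemma Der_zero: assumes "d \<in> Der n p" shows "d On_zero = On_zero"
proof -
  have "On_scale 0 On_zero = (On_zero :: (nat \<Rightarrow> nat) \<Rightarrow> 'a)"
    by (simp add: On_zero_def On_scale_def)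
  then have "d On_zero = On_scale 0 (d On_zero)"
    using Der_scale[OF assms On_zero_On, of 0] by simp
  then show ?thesis
    by (simp add: On_scale_def On_zero_def)
qed

lemma Der_one: assumes d: "d \<in> Der n p" and "0 < p" shows "d On_one = On_zero"
proof -
  have one: "On_one \<in> On n p" and d1: "d On_one \<in> On n p"
    using On_one_On[OF \<open>0 < p\<close>] Der_On[OF d] by auto
  have "d On_one = On_add (d On_one) (d On_one)"
    using Der_mult[OF d one one]
    by (simp add: On_mult_one[OF one \<open>0 < p\<close>] On_mult_one[OF d1 \<open>0 < p\<close>]
        On_mult_one_left[OF d1 \<open>0 < p\<close>])
  then have "d On_one x = d On_one x + d On_one x" for x
    by (metis On_add_def)
  then show ?thesis
    unfolding On_zero_def by (intro ext) (metis add_cancel_right_right)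
qed

lemma Der_eq_sum_monom_basis:
  assumes d: "d \<in> Der n p" and g: "g \<in> On n p"
  shows "d g \<gamma> = (\<Sum>\<alpha>\<in>Mon n p. g \<alpha> * d (monom_basis \<alpha>) \<gamma>)"
proof -
  have partial: "d (\<lambda>\<beta>. if \<beta> \<in> A then g \<beta> else 0) \<gamma> = (\<Sum>\<alpha>\<in>A. g \<alpha> * d (monom_basis \<alpha>) \<gamma>)"
    if "finite A" "A \<subseteq> Mon n p" for A
    using that
  proof (induction A rule: finite_induct)
    case empty
    have "(\<lambda>\<beta>. if \<beta> \<in> {} then g \<beta> else 0) = On_zero"
      by (simp add: On_zero_def fun_eq_iff)
    then show ?case
      using Der_zero[OF d] by (simp add: On_zero_def)
  next
    case (insert a A)
    have gA: "(\<lambda>\<beta>. if \<beta> \<in> A then g \<beta> else 0) \<in> On n p"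
      using insert by (auto simp: On_def)
    have ma: "monom_basis a \<in> On n p"
      using insert monom_basis_On by blast
    have "(\<lambda>\<beta>. if \<beta> \<in> insert a A then g \<beta> else 0) =
        On_add (\<lambda>\<beta>. if \<beta> \<in> A then g \<beta> else 0) (On_scale (g a) (monom_basis a))"
      using insert by (auto simp: On_add_def On_scale_def monom_basis_def)
    then show ?case
      using insert Der_add[OF d gA On_scale_On[OF ma]] Der_scale[OF d ma]
      by (simp add: On_add_def On_scale_def add.commute)
  qed
  have "(\<lambda>\<beta>. if \<beta> \<in> Mon n p then g \<beta> else 0) = g"
    using g by (auto simp: On_def)
  with partial[OF finite_Mon order_refl] show ?thesis
    by simp
qed

section \<open>Perfect Lie algebras\<close>

inductive_set bracket_sums :: "('s::ab_group_add \<Rightarrow> 's \<Rightarrow> 's) \<Rightarrow> 's set" for br where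
  zero: "0 \<in> bracket_sums br"
| bracket: "br a b \<in> bracket_sums br"
| add: "x \<in> bracket_sums br \<Longrightarrow> y \<in> bracket_sums br \<Longrightarrow> x + y \<in> bracket_sums br"

lemma field_double_eq_zero:
  fixes c :: "'k::field"
  assumes "(2::'k) \<noteq> 0" and "c + c = 0"
  shows "c = 0"
  using assms by (metis mult_2 divisors_zero)

locale perfect_lie_algebra =
  fixes sm :: "'k::field \<Rightarrow> 's::ab_group_add \<Rightarrow> 's" and br :: "'s \<Rightarrow> 's \<Rightarrow> 's"
  assumes lie: "lie_algebra sm br"
    and perfect: "bracket_sums br = UNIV"
begin

sublocale S: vector_space sm
  using lie by (simp add: lie_algebra_def)

lemma br_add_left: "br (x + y) z = br x z + br y z"
  using lie by (simp add: lie_algebra_def)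

lemma br_add_right: "br x (y + z) = br x y + br x z"
  using lie by (simp add: lie_algebra_def)

lemma br_scale_left: "br (sm c x) y = sm c (br x y)"
  using lie by (simp add: lie_algebra_def)

lemma br_scale_right: "br x (sm c y) = sm c (br x y)"
  using lie by (simp add: lie_algebra_def)

lemma br_self: "br x x = 0"
  using lie by (simp add: lie_algebra_def)

lemma jacobi: "br x (br y z) + br y (br z x) + br z (br x y) = 0"
  using lie by (simp add: lie_algebra_def)

lemma br_zero_left: "br 0 x = 0"
  using br_add_left[of 0 0 x] by simp

lemma br_zero_right: "br x 0 = 0"
  using br_add_right[of x 0 0] by simp

lemma br_minus_right: "br x (- y) = - br x y"
  using br_add_right[of x y "- y"] by (simp add: br_zero_right eq_neg_iff_add_eq_0 add.commute)

lemma br_anticomm: "br y x = - br x y"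
proof -
  have "br (x + y) (x + y) = br x x + br y x + (br x y + br y y)"
    by (simp only: br_add_left br_add_right)
  then have "br x y + br y x = 0"
    by (simp add: br_self add.commute)
  then show ?thesis
    by (simp add: eq_neg_iff_add_eq_0 add.commute)
qed

lemma br_br_left: "br (br a b) s = br a (br b s) - br b (br a s)"
  using jacobi[of a b s] br_anticomm[of s a] br_anticomm[of s "br a b"]
  by (simp add: br_minus_right algebra_simps)

lemma perfect_induct [case_names zero add bracket]:
  assumes "Q 0" "\<And>x y. Q x \<Longrightarrow> Q y \<Longrightarrow> Q (x + y)" "\<And>a b. Q (br a b)"
  shows "Q s"
proof -
  have "s \<in> bracket_sums br"
    using perfect by simp
  then show ?thesis
    by induction (use assms in auto)
qed

context
  fixes A :: "'s \<Rightarrow> 's \<Rightarrow> 'k"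
  assumes two: "(2::'k) \<noteq> 0"
    and add_left: "\<And>x y t. A (x + y) t = A x t + A y t"
begin

lemma additive_form_zero_left: "A 0 t = 0"
  using add_left[of 0 0 t] by (metis add_0 add_cancel_right_right)

text \<open>Adding two instances of the cyclic identity, antisymmetry leaves twice one term.\<close>
lemma antisymmetric_cyclic_form_zero:
  assumes cyclic: "\<And>s t u. A u (br s t) + A (br u s) t + A (br t u) s = 0"
    and antisym: "\<And>s t. A s t = - A t s"
  shows "A x t = 0"
proof (induction x rule: perfect_induct)
  case (bracket u s)
  have "A (br u s) t + A (br u s) t =
      (A u (br s t) + A (br u s) t + A (br t u) s) + (A s (br t u) + A (br s t) u + A (br u s) t)"
    using antisym[of u "br s t"] antisym[of s "br t u"] by (simp add: algebra_simps)
  also have "\<dots> = 0"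
    using cyclic by simp
  finally show ?case
    by (rule field_double_eq_zero[OF two])
qed (simp_all add: additive_form_zero_left add_left)

text \<open>If every \<open>ad u\<close> is self-adjoint for \<open>A\<close>, Jacobi makes \<open>ad [a,b]\<close> also skew-adjoint;
  perfectness then propagates the vanishing.\<close>
lemma ad_symmetric_form_zero:
  assumes add_right: "\<And>x y t. A t (x + y) = A t x + A t y"
    and ad_sym: "\<And>u s t. A (br u s) t = A s (br u t)"
  shows "A s y = 0"
proof -
  have zero_right: "A s 0 = 0" for s
    using add_right[of s 0 0] by (metis add_0 add_cancel_right_right)
  have "A (br (br a b) s) t = - A s (br (br a b) t)" for a b s t
  proof -
    have "A (br (br a b) s) t = A (br a (br b s)) t - A (br b (br a s)) t"
      using br_br_left[of a b s] add_left[of "br a (br b s) - br b (br a s)" "br b (br a s)" t] by simp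
    also have "\<dots> = A s (br b (br a t)) - A s (br a (br b t))"
      by (simp add: ad_sym)
    also have "\<dots> = - A s (br (br a b) t)"
      using add_right[of s "br a (br b t) - br b (br a t)" "br b (br a t)"]
      by (simp add: br_br_left)
    finally show ?thesis .
  qed
  then have bracket_bracket: "A s (br (br a b) t) = 0" for a b s t
    using ad_sym[of "br a b" s t] field_double_eq_zero[OF two] by (metis neg_eq_iff_add_eq_0)
  have "A s (br c t) = 0" for c t
    by (induction c rule: perfect_induct)
      (simp_all add: br_zero_left br_add_left add_right zero_right bracket_bracket)
  then show ?thesis
    by (induction y rule: perfect_induct) (simp_all add: add_right zero_right)
qed

end

end

lemma bracket_sums_scale:
  assumes "lie_algebra sm br" "x \<in> bracket_sums br"
  shows "sm c x \<in> bracket_sums br"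
proof -
  interpret vector_space sm
    using assms(1) by (simp add: lie_algebra_def)
  from assms(2) show ?thesis
  proof induction
    case (bracket a b)
    then show ?case
      using assms(1) bracket_sums.bracket[of br "sm c a" b] by (simp add: lie_algebra_def)
  qed (auto intro: bracket_sums.intros simp: scale_right_distrib)
qed

lemma simple_lie_algebra_perfect:
  assumes "simple_lie_algebra sm br"
  shows "perfect_lie_algebra sm br"
proof
  show lie: "lie_algebra sm br"
    using assms by (simp add: simple_lie_algebra_def)
  have "lie_ideal sm br (bracket_sums br)"
    unfolding lie_ideal_def
    by (auto intro: bracket_sums.intros bracket_sums_scale[OF lie])
  moreover obtain x y where "br x y \<noteq> 0"
    using assms by (auto simp: simple_lie_algebra_def)
  ultimately show "bracket_sums br = UNIV"
    using assms bracket_sums.bracket[of br x y] by (auto simp: simple_lie_algebra_def)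
qed

section \<open>The Lie algebra \<open>(S \<otimes> O\<^sub>n) \<oplus> D\<close>\<close>

definition tensor_elem ::
  "('k::field \<Rightarrow> 's::ab_group_add \<Rightarrow> 's) \<Rightarrow> 's \<Rightarrow> ((nat \<Rightarrow> nat) \<Rightarrow> 'k) \<Rightarrow> ('k, 's) Lelem" where
  "tensor_elem sm s f = ((\<lambda>\<alpha>. sm (f \<alpha>) s), der_zero)"

definition der_elem ::
  "(((nat \<Rightarrow> nat) \<Rightarrow> 'k::field) \<Rightarrow> ((nat \<Rightarrow> nat) \<Rightarrow> 'k)) \<Rightarrow> ('k, 's::ab_group_add) Lelem" where
  "der_elem d = ((\<lambda>\<alpha>. 0), d)"

locale current_algebra = perfect_lie_algebra sm br
  for sm :: "'k::field \<Rightarrow> 's::ab_group_add \<Rightarrow> 's" and br +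
  fixes n p :: nat and D :: "(((nat \<Rightarrow> nat) \<Rightarrow> 'k) \<Rightarrow> ((nat \<Rightarrow> nat) \<Rightarrow> 'k)) set"
  assumes two: "(2::'k) \<noteq> 0"
    and p_gt_1: "1 < p"
    and n_ge_1: "1 \<le> n"
    and subalgebra: "lie_subalgebra_Wn n p D"
    and D_simple: "On_D_simple n p D"
begin

abbreviation "L \<equiv> L_carrier n p D"
abbreviation "LB \<equiv> L_br n p sm br"
abbreviation "tens \<equiv> tensor_elem sm"
abbreviation L_zero :: "('k, 's) Lelem" where "L_zero \<equiv> der_elem der_zero"

lemma p_pos: "0 < p"
  using p_gt_1 by simp

lemma On_one_mem: "On_one \<in> On n p"
  using On_one_On[OF p_pos] .

lemma D_Der: "d \<in> D \<Longrightarrow> d \<in> Der n p"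
  using subalgebra by (auto simp: lie_subalgebra_Wn_def)

lemma D_der_in_On: "d \<in> D \<Longrightarrow> d f \<in> On n p"
  using Der_On D_Der by blast

lemma der_zero_D: "der_zero \<in> D"
  using subalgebra by (simp add: lie_subalgebra_Wn_def)

lemma der_add_D: "d \<in> D \<Longrightarrow> e \<in> D \<Longrightarrow> der_add d e \<in> D"
  using subalgebra by (simp add: lie_subalgebra_Wn_def)

lemma der_scale_D: "d \<in> D \<Longrightarrow> der_scale c d \<in> D"
  using subalgebra by (simp add: lie_subalgebra_Wn_def)

lemma der_br_D: "d \<in> D \<Longrightarrow> e \<in> D \<Longrightarrow> der_br d e \<in> D"
  using subalgebra by (simp add: lie_subalgebra_Wn_def)

lemma D_der_one: "d \<in> D \<Longrightarrow> d On_one = On_zero"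
  using Der_one[OF D_Der p_pos] .

lemma tensor_elem_L: "f \<in> On n p \<Longrightarrow> tens s f \<in> L"
  by (auto simp: tensor_elem_def L_carrier_def SO_def On_def der_zero_D)

lemma der_elem_L: "d \<in> D \<Longrightarrow> der_elem d \<in> L"
  by (auto simp: der_elem_def L_carrier_def SO_def)

lemma L_zero_L: "L_zero \<in> L"
  by (rule der_elem_L[OF der_zero_D])

lemma snd_L: "X \<in> L \<Longrightarrow> snd X \<in> D"
  by (auto simp: L_carrier_def)

lemma L_add_L: "X \<in> L \<Longrightarrow> Y \<in> L \<Longrightarrow> L_add X Y \<in> L"
  by (auto simp: L_add_def L_carrier_def SO_def der_add_D)

lemma L_scale_L: "X \<in> L \<Longrightarrow> L_scale sm c X \<in> L"
  by (auto simp: L_scale_def L_carrier_def SO_def der_scale_D)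

lemma SO_act_outside_Mon:
  assumes "d \<in> Der n p" "\<gamma> \<notin> Mon n p"
  shows "SO_act n p sm d F \<gamma> = 0"
proof -
  have "d (monom_basis \<alpha>) \<gamma> = 0" for \<alpha>
    using Der_On[OF assms(1)] assms(2) by (simp add: On_def)
  then show ?thesis
    by (simp add: SO_act_def)
qed

lemma L_br_L: assumes "X \<in> L" "Y \<in> L" shows "LB X Y \<in> L"
  using assms SO_act_outside_Mon[OF D_Der[OF snd_L[OF assms(1)]]]
    SO_act_outside_Mon[OF D_Der[OF snd_L[OF assms(2)]]]
  by (auto simp: L_br_def L_carrier_def SO_def SO_br_def der_br_D)

lemma SO_act_der_zero: "SO_act n p sm der_zero F = (\<lambda>\<gamma>. 0)"
  by (simp add: SO_act_def der_zero_def On_zero_def)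

lemma SO_act_zero: "SO_act n p sm d (\<lambda>\<alpha>. 0) = (\<lambda>\<gamma>. 0)"
  by (simp add: SO_act_def)

lemma SO_br_zero_left: "SO_br n p br (\<lambda>\<alpha>. 0) G = (\<lambda>\<gamma>. 0)"
  by (auto simp: SO_br_def br_zero_left intro!: sum.neutral)

lemma SO_br_zero_right: "SO_br n p br G (\<lambda>\<alpha>. 0) = (\<lambda>\<gamma>. 0)"
  by (auto simp: SO_br_def br_zero_right intro!: sum.neutral)

lemma SO_act_tensor:
  assumes d: "d \<in> Der n p" and g: "g \<in> On n p"
  shows "SO_act n p sm d (\<lambda>\<alpha>. sm (g \<alpha>) t) = (\<lambda>\<gamma>. sm (d g \<gamma>) t)"
proof
  fix \<gamma>
  have "SO_act n p sm d (\<lambda>\<alpha>. sm (g \<alpha>) t) \<gamma> = sm (\<Sum>\<alpha>\<in>Mon n p. g \<alpha> * d (monom_basis \<alpha>) \<gamma>) t"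
    by (simp add: SO_act_def S.scale_scale S.scale_sum_left mult.commute)
  then show "SO_act n p sm d (\<lambda>\<alpha>. sm (g \<alpha>) t) \<gamma> = sm (d g \<gamma>) t"
    using Der_eq_sum_monom_basis[OF d g] by simp
qed

lemma SO_br_tensor:
  "SO_br n p br (\<lambda>\<alpha>. sm (f \<alpha>) s) (\<lambda>\<beta>. sm (g \<beta>) t) = (\<lambda>\<gamma>. sm (On_mult n p f g \<gamma>) (br s t))"
  by (auto simp: SO_br_def On_mult_def case_prod_beta br_scale_left br_scale_right S.scale_scale
      S.scale_sum_left mult.commute)

lemma der_br_der_zero_right: "d \<in> Der n p \<Longrightarrow> der_br d der_zero = der_zero"
  by (simp add: der_br_def der_zero_def Der_zero) (simp add: On_zero_def)

lemma der_br_der_zero_left: "d \<in> Der n p \<Longrightarrow> der_br der_zero d = der_zero"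
  by (simp add: der_br_def der_zero_def Der_zero) (simp add: On_zero_def)

lemma L_br_tensor_tensor: "LB (tens s f) (tens t g) = tens (br s t) (On_mult n p f g)"
  by (simp add: L_br_def tensor_elem_def SO_br_tensor SO_act_der_zero
      der_br_der_zero_right[OF D_Der[OF der_zero_D]])

lemma L_br_der_tensor: "d \<in> D \<Longrightarrow> g \<in> On n p \<Longrightarrow> LB (der_elem d) (tens t g) = tens t (d g)"
  by (simp add: L_br_def tensor_elem_def der_elem_def SO_br_zero_left SO_act_tensor[OF D_Der]
      SO_act_zero der_br_der_zero_right[OF D_Der])

lemma L_br_tensor_der: "d \<in> D \<Longrightarrow> g \<in> On n p \<Longrightarrow> LB (tens t g) (der_elem d) = tens (- t) (d g)"
  by (simp add: L_br_def tensor_elem_def der_elem_def SO_br_zero_right SO_act_tensor[OF D_Der]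
      SO_act_der_zero der_br_der_zero_left[OF D_Der])

lemma L_br_der_der: "LB (der_elem d) (der_elem e) = der_elem (der_br d e)"
  by (simp add: L_br_def der_elem_def SO_br_zero_right SO_act_zero)

lemma tensor_elem_On_zero: "tens s On_zero = L_zero"
  by (simp add: tensor_elem_def der_elem_def On_zero_def)

lemma tensor_elem_zero: "tens 0 f = L_zero"
  by (simp add: tensor_elem_def der_elem_def)

lemma tensor_elem_add: "tens (s + t) f = L_add (tens s f) (tens t f)"
  by (simp add: tensor_elem_def L_add_def S.scale_right_distrib der_add_def der_zero_def
      On_add_def On_zero_def)

lemma tensor_elem_uminus: "tens (- s) f = L_scale sm (-1) (tens s f)"
  by (simp add: tensor_elem_def L_scale_def der_scale_def der_zero_def On_scale_def On_zero_def)

lemma tensor_elem_On_add: "tens s (On_add f g) = L_add (tens s f) (tens s g)"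
  by (simp add: tensor_elem_def L_add_def S.scale_left_distrib der_add_def der_zero_def
      On_add_def On_zero_def)

lemma L_scale_zero: "L_scale sm 0 L_zero = L_zero"
  by (simp add: der_elem_def L_scale_def der_scale_def der_zero_def On_scale_def On_zero_def)

lemma snd_tensor_elem: "snd (tens s f) = der_zero"
  by (simp add: tensor_elem_def)

lemma snd_der_elem: "snd (der_elem d) = d"
  by (simp add: der_elem_def)

lemma snd_L_add: "snd (L_add X Y) = der_add (snd X) (snd Y)"
  by (simp add: L_add_def)

lemma snd_L_scale: "snd (L_scale sm c X) = der_scale c (snd X)"
  by (simp add: L_scale_def)

lemma snd_L_br: "snd (LB X Y) = der_br (snd X) (snd Y)"
  by (simp add: L_br_def)

lemma der_elem_add: "der_elem (der_add d e) = L_add (der_elem d) (der_elem e)"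
  by (simp add: der_elem_def L_add_def)

lemma der_elem_scale: "der_elem (der_scale c d) = L_scale sm c (der_elem d)"
  by (simp add: der_elem_def L_scale_def)

lemma L_carrier_induct [consumes 1, case_names zero add tensor der]:
  assumes X: "X \<in> L" and zero: "Q L_zero"
    and add: "\<And>X Y. X \<in> L \<Longrightarrow> Y \<in> L \<Longrightarrow> Q X \<Longrightarrow> Q Y \<Longrightarrow> Q (L_add X Y)"
    and tensor: "\<And>s f. f \<in> On n p \<Longrightarrow> Q (tens s f)"
    and der: "\<And>d. d \<in> D \<Longrightarrow> Q (der_elem d)"
  shows "Q X"
proof -
  obtain F e where X_eq: "X = (F, e)" and F: "F \<in> SO n p" and e: "e \<in> D"
    using X by (auto simp: L_carrier_def)
  define part :: "_ \<Rightarrow> ('k, 's) Lelem"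
    where "part A = ((\<lambda>\<alpha>. if \<alpha> \<in> A then F \<alpha> else 0), der_zero)" for A
  have part: "part A \<in> L \<and> Q (part A)" if "finite A" "A \<subseteq> Mon n p" for A
    using that
  proof (induction A rule: finite_induct)
    case empty
    have "part {} = L_zero"
      by (simp add: part_def der_elem_def)
    then show ?case
      using zero L_zero_L by simp
  next
    case (insert a A)
    have a: "monom_basis a \<in> On n p"
      using insert monom_basis_On by blast
    have "part (insert a A) = L_add (part A) (tens (F a) (monom_basis a))"
      using insert(2)
      by (auto simp: part_def L_add_def tensor_elem_def monom_basis_def der_add_def der_zero_def
          On_add_def On_zero_def)
    then show ?case
      using insert.IH insert.prems tensor_elem_L[OF a] tensor[OF a] by (auto intro: L_add_L add)
  qed
  have "part (Mon n p) = (F, der_zero)"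
    using F by (auto simp: part_def SO_def)
  with part[OF finite_Mon order_refl] have "(F, der_zero) \<in> L" "Q (F, der_zero)"
    by auto
  moreover have "X = L_add (F, der_zero) (der_elem e)"
    by (simp add: X_eq L_add_def der_elem_def der_add_def der_zero_def On_add_def On_zero_def)
  ultimately show ?thesis
    using der_elem_L[OF e] der[OF e] add by simp
qed

text \<open>Otherwise the maximal ideal of \<open>O\<^sub>n\<close> would be a proper nonzero \<open>D\<close>-invariant ideal.\<close>
lemma D_acts_nontrivially: "\<exists>d\<in>D. \<exists>g\<in>On n p. d g \<noteq> On_zero"
proof (rule ccontr)
  assume "\<not> ?thesis"
  then have trivial: "d g = On_zero" if "d \<in> D" "g \<in> On n p" for d g
    using that by blast
  define x1 where "x1 = (\<lambda>i::nat. if i = 0 then 1 else (0::nat))"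
  have "x1 \<in> Mon n p"
    using n_ge_1 p_gt_1 by (auto simp: Mon_def x1_def)
  moreover have "x1 \<noteq> zero_exponent"
    by (auto simp: x1_def zero_exponent_def fun_eq_iff)
  ultimately have x1_On: "monom_basis x1 \<in> On n p" and x1_at_zero: "monom_basis x1 zero_exponent = (0::'k)"
    using monom_basis_On by (auto simp: monom_basis_def)
  have x1_nonzero: "monom_basis x1 \<noteq> (On_zero :: _ \<Rightarrow> 'k)"
    by (auto simp: monom_basis_def On_zero_def fun_eq_iff)
  define m where "m = {f \<in> On n p. f zero_exponent = (0::'k)}"
  have "On_ideal n p m"
    unfolding On_ideal_def
  proof (intro conjI ballI)
    show "On_mult n p f g \<in> m" if "f \<in> On n p" "g \<in> m" for f g
    proof -
      have "On_mult n p f g zero_exponent = f zero_exponent * g zero_exponent"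
        using zero_exponent_Mon[OF p_pos] by (simp add: On_mult_def mon_pairs_zero_exponent[OF p_pos])
      then show ?thesis
        using that by (simp add: m_def On_mult_On)
    qed
  qed (auto simp: m_def On_zero_On On_add_On, auto simp: On_zero_def On_add_def)
  moreover have "\<forall>d\<in>D. \<forall>f\<in>m. d f \<in> m"
    using trivial On_zero_On unfolding m_def by (auto simp: On_zero_def)
  ultimately have "m = {On_zero} \<or> m = On n p"
    using D_simple by (simp add: On_D_simple_def)
  moreover have "monom_basis x1 \<in> m"
    using x1_On x1_at_zero by (simp add: m_def)
  moreover have "On_one \<notin> m"
    by (simp add: m_def monom_basis_def)
  ultimately show False
    using On_one_mem x1_nonzero by blast
qed

lemma On_ideal_containing_derivatives:
  assumes J: "On_ideal n p J" and der: "\<And>d g. d \<in> D \<Longrightarrow> g \<in> On n p \<Longrightarrow> d g \<in> J"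
  shows "J = On n p"
proof -
  have "\<forall>d\<in>D. \<forall>f\<in>J. d f \<in> J"
    using J der by (auto simp: On_ideal_def)
  then have "J = {On_zero} \<or> J = On n p"
    using J D_simple by (simp add: On_D_simple_def)
  moreover obtain d g where "d \<in> D" "g \<in> On n p" "d g \<noteq> On_zero"
    using D_acts_nontrivially by blast
  ultimately show ?thesis
    using der by blast
qed

end

section \<open>Commutative cocycles on \<open>(S \<otimes> O\<^sub>n) \<oplus> D\<close>\<close>

locale current_cocycle = current_algebra sm br n p D
  for sm :: "'k::field \<Rightarrow> 's::ab_group_add \<Rightarrow> 's" and br n p D +
  fixes \<phi> :: "('k, 's) Lelem \<Rightarrow> ('k, 's) Lelem \<Rightarrow> 'k"
  assumes cocycle: "\<phi> \<in> Z2comm (L_carrier n p D) L_add (L_scale sm) (L_br n p sm br)"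
begin

lemma phi_outside: "X \<notin> L \<or> Y \<notin> L \<Longrightarrow> \<phi> X Y = 0"
  using cocycle unfolding Z2comm_def by blast

lemma phi_sym: "\<phi> X Y = \<phi> Y X"
proof (cases "X \<in> L \<and> Y \<in> L")
  case True
  with cocycle show ?thesis
    unfolding Z2comm_def by blast
qed (auto simp: phi_outside)

lemma phi_add: assumes "X \<in> L" "Y \<in> L" shows "\<phi> (L_add X Y) Z = \<phi> X Z + \<phi> Y Z"
proof (cases "Z \<in> L")
  case True
  with cocycle assms show ?thesis
    unfolding Z2comm_def by blast
qed (simp add: phi_outside)

lemma phi_scale: assumes "X \<in> L" shows "\<phi> (L_scale sm c X) Z = c * \<phi> X Z"
proof (cases "Z \<in> L")
  case True
  with cocycle assms show ?thesis
    unfolding Z2comm_def by blast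
qed (simp add: phi_outside)

lemma phi_cyclic:
  "X \<in> L \<Longrightarrow> Y \<in> L \<Longrightarrow> Z \<in> L \<Longrightarrow> \<phi> (LB X Y) Z + \<phi> (LB Z X) Y + \<phi> (LB Y Z) X = 0"
  using cocycle unfolding Z2comm_def by blast

lemma phi_L_zero: "\<phi> L_zero Y = 0"
  using phi_scale[OF L_zero_L, of 0 Y] L_scale_zero by simp

lemma phi_tensor_add: "f \<in> On n p \<Longrightarrow> \<phi> (tens (s + t) f) Y = \<phi> (tens s f) Y + \<phi> (tens t f) Y"
  by (simp add: tensor_elem_add phi_add tensor_elem_L)

lemma phi_tensor_uminus: "f \<in> On n p \<Longrightarrow> \<phi> (tens (- s) f) Y = - \<phi> (tens s f) Y"
  by (simp add: tensor_elem_uminus phi_scale tensor_elem_L)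

lemma phi_tensor_On_add:
  "f \<in> On n p \<Longrightarrow> g \<in> On n p \<Longrightarrow> \<phi> (tens s (On_add f g)) Y = \<phi> (tens s f) Y + \<phi> (tens s g) Y"
  by (simp add: tensor_elem_On_add phi_add tensor_elem_L)

lemma phi_tensor_zero_if_brackets:
  assumes "f \<in> On n p" and "\<And>a b. \<phi> (tens (br a b) f) Y = 0"
  shows "\<phi> (tens s f) Y = 0"
  by (induction s rule: perfect_induct)
    (simp_all add: tensor_elem_zero phi_L_zero phi_tensor_add assms)

lemma phi_der_tensor_one:
  assumes d: "d \<in> D" and f: "f \<in> On n p"
  shows "\<phi> (tens s (d f)) (tens t On_one) = - \<phi> (tens (br s t) f) (der_elem d)"
proof -
  have "\<phi> (LB (der_elem d) (tens s f)) (tens t On_one) + \<phi> (LB (tens t On_one) (der_elem d)) (tens s f)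
      + \<phi> (LB (tens s f) (tens t On_one)) (der_elem d) = 0"
    by (rule phi_cyclic) (auto simp: tensor_elem_L On_one_mem der_elem_L d f)
  then show ?thesis
    by (simp add: L_br_der_tensor L_br_tensor_der L_br_tensor_tensor d f On_one_mem D_der_one
        tensor_elem_On_zero phi_L_zero On_mult_one[OF f p_pos] eq_neg_iff_add_eq_0)
qed

lemma phi_tensor_one_cyclic:
  assumes g: "g \<in> On n p"
  shows "\<phi> (tens u g) (tens (br s t) On_one) + \<phi> (tens (br u s) g) (tens t On_one)
    + \<phi> (tens (br t u) g) (tens s On_one) = 0"
proof -
  have "\<phi> (LB (tens s On_one) (tens t On_one)) (tens u g) + \<phi> (LB (tens u g) (tens s On_one)) (tens t On_one)
      + \<phi> (LB (tens t On_one) (tens u g)) (tens s On_one) = 0"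
    by (rule phi_cyclic) (auto simp: tensor_elem_L On_one_mem g)
  then show ?thesis
    by (simp add: L_br_tensor_tensor On_mult_one[OF On_one_mem p_pos] On_mult_one[OF g p_pos]
        On_mult_one_left[OF g p_pos] phi_sym[of _ "tens u g"])
qed

text \<open>The pairing \<open>(s, t) \<mapsto> \<phi>(s \<otimes> d f, t \<otimes> 1)\<close> is antisymmetric, since by the previous
  lemma it equals \<open>-\<phi>([s,t] \<otimes> f, d)\<close>.\<close>
lemma phi_derivative_tensor_one_zero:
  assumes d: "d \<in> D" and f: "f \<in> On n p"
  shows "\<phi> (tens x (d f)) (tens t On_one) = 0"
proof (rule antisymmetric_cyclic_form_zero[where A = "\<lambda>x t. \<phi> (tens x (d f)) (tens t On_one)", OF two])
  show "\<phi> (tens (x + y) (d f)) (tens t On_one) = \<phi> (tens x (d f)) (tens t On_one) + \<phi> (tens y (d f)) (tens t On_one)"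
    for x y t
    by (rule phi_tensor_add[OF D_der_in_On[OF d]])
  show "\<phi> (tens u (d f)) (tens (br s t) On_one) + \<phi> (tens (br u s) (d f)) (tens t On_one)
      + \<phi> (tens (br t u) (d f)) (tens s On_one) = 0" for s t u
    by (rule phi_tensor_one_cyclic[OF D_der_in_On[OF d]])
  show "\<phi> (tens s (d f)) (tens t On_one) = - \<phi> (tens t (d f)) (tens s On_one)" for s t
    using phi_der_tensor_one[OF d f, of s t] phi_der_tensor_one[OF d f, of t s] br_anticomm[of t s]
      phi_tensor_uminus[OF f, of "br s t" "der_elem d"]
    by simp
qed

lemma phi_tensor_der_zero:
  assumes d: "d \<in> D" and f: "f \<in> On n p"
  shows "\<phi> (tens x f) (der_elem d) = 0"
proof (rule phi_tensor_zero_if_brackets[OF f])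
  fix a b
  show "\<phi> (tens (br a b) f) (der_elem d) = 0"
    using phi_der_tensor_one[OF d f, of a b] phi_derivative_tensor_one_zero[OF d f, of a b] by simp
qed

lemma phi_derivative_adjoint:
  assumes d: "d \<in> D" and f: "f \<in> On n p" and g: "g \<in> On n p"
  shows "\<phi> (tens s (d f)) (tens t g) = \<phi> (tens s f) (tens t (d g))"
proof -
  have "\<phi> (LB (der_elem d) (tens s f)) (tens t g) + \<phi> (LB (tens t g) (der_elem d)) (tens s f)
      + \<phi> (LB (tens s f) (tens t g)) (der_elem d) = 0"
    by (rule phi_cyclic) (auto simp: tensor_elem_L der_elem_L d f g)
  then show ?thesis
    using phi_tensor_uminus[OF D_der_in_On[OF d], of t g "tens s f"]
    by (simp add: L_br_der_tensor L_br_tensor_der L_br_tensor_tensor d f g phi_tensor_der_zero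
        On_mult_On phi_sym[of "tens t (d g)"] eq_neg_iff_add_eq_0)
qed

lemma phi_tensor_tensor_one_cyclic:
  assumes f: "f \<in> On n p" and g: "g \<in> On n p"
  shows "\<phi> (tens (br u s) f) (tens t g) + \<phi> (tens (br t u) g) (tens s f)
    + \<phi> (tens (br s t) (On_mult n p f g)) (tens u On_one) = 0"
proof -
  have "\<phi> (LB (tens u On_one) (tens s f)) (tens t g) + \<phi> (LB (tens t g) (tens u On_one)) (tens s f)
      + \<phi> (LB (tens s f) (tens t g)) (tens u On_one) = 0"
    by (rule phi_cyclic) (auto simp: tensor_elem_L On_one_mem f g)
  then show ?thesis
    by (simp add: L_br_tensor_tensor On_mult_one_left[OF f p_pos] On_mult_one[OF g p_pos])
qed

text \<open>Comparing the last identity for \<open>(d a, b)\<close> and \<open>(a, d b)\<close> by adjointness shows that both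
  Leibniz terms of \<open>d (a b)\<close> contribute equally, and their sum vanishes.\<close>
lemma phi_Leibniz_term_tensor_one_zero:
  assumes d: "d \<in> D" and a: "a \<in> On n p" and b: "b \<in> On n p"
  shows "\<phi> (tens x (On_mult n p (d a) b)) (tens u On_one) = 0"
proof (rule phi_tensor_zero_if_brackets[OF On_mult_On])
  fix s t
  have da: "d a \<in> On n p" and db: "d b \<in> On n p"
    using D_der_in_On[OF d] by auto
  have H1: "\<phi> (tens (br u s) (d a)) (tens t b) + \<phi> (tens (br t u) b) (tens s (d a))
      + \<phi> (tens (br s t) (On_mult n p (d a) b)) (tens u On_one) = 0"
    by (rule phi_tensor_tensor_one_cyclic[OF da b])
  have H2: "\<phi> (tens (br u s) a) (tens t (d b)) + \<phi> (tens (br t u) (d b)) (tens s a)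
      + \<phi> (tens (br s t) (On_mult n p a (d b))) (tens u On_one) = 0"
    by (rule phi_tensor_tensor_one_cyclic[OF a db])
  have A1: "\<phi> (tens (br u s) (d a)) (tens t b) = \<phi> (tens (br u s) a) (tens t (d b))"
    by (rule phi_derivative_adjoint[OF d a b])
  have A2: "\<phi> (tens (br t u) b) (tens s (d a)) = \<phi> (tens (br t u) (d b)) (tens s a)"
    using phi_derivative_adjoint[OF d a b, of s "br t u"]
    by (simp add: phi_sym[of "tens (br t u) b"] phi_sym[of "tens (br t u) (d b)"])
  have equal: "\<phi> (tens (br s t) (On_mult n p (d a) b)) (tens u On_one)
      = \<phi> (tens (br s t) (On_mult n p a (d b))) (tens u On_one)"
    using H1 H2 unfolding A1 A2 by (metis add_left_cancel)
  have "\<phi> (tens (br s t) (d (On_mult n p a b))) (tens u On_one) = 0"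
    by (rule phi_derivative_tensor_one_zero[OF d On_mult_On])
  then have "\<phi> (tens (br s t) (On_mult n p (d a) b)) (tens u On_one)
      + \<phi> (tens (br s t) (On_mult n p a (d b))) (tens u On_one) = 0"
    using Der_mult[OF D_Der[OF d] a b] phi_tensor_On_add[OF On_mult_On On_mult_On] by simp
  then show "\<phi> (tens (br s t) (On_mult n p (d a) b)) (tens u On_one) = 0"
    unfolding equal[symmetric] by (rule field_double_eq_zero[OF two])
qed

lemma phi_tensor_one_zero:
  assumes h: "h \<in> On n p"
  shows "\<phi> (tens x h) (tens u On_one) = 0"
proof -
  define J where "J = {g \<in> On n p. \<forall>h\<in>On n p. \<forall>x u. \<phi> (tens x (On_mult n p g h)) (tens u On_one) = 0}"
  have "On_ideal n p J"
    unfolding On_ideal_def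
  proof (intro conjI ballI)
    show "On_mult n p f g \<in> J" if "f \<in> On n p" "g \<in> J" for f g
      using that by (auto simp: J_def On_mult_On On_mult_assoc On_mult_comm[of n p f])
  qed (auto simp: J_def On_zero_On On_add_On On_mult_On On_mult_zero_left tensor_elem_On_zero
      phi_L_zero On_mult_add_left phi_tensor_On_add)
  moreover have "d g \<in> J" if "d \<in> D" "g \<in> On n p" for d g
    using that phi_Leibniz_term_tensor_one_zero D_der_in_On by (auto simp: J_def)
  ultimately have "On_one \<in> J"
    using On_ideal_containing_derivatives On_one_mem by blast
  then show ?thesis
    using h On_mult_one_left[OF h p_pos] by (auto simp: J_def)
qed

lemma phi_tensor_tensor_zero:
  assumes f: "f \<in> On n p" and g: "g \<in> On n p"
  shows "\<phi> (tens x f) (tens y g) = 0"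
proof (rule ad_symmetric_form_zero[where A = "\<lambda>x y. \<phi> (tens x f) (tens y g)", OF two])
  show "\<phi> (tens (a + b) f) (tens t g) = \<phi> (tens a f) (tens t g) + \<phi> (tens b f) (tens t g)" for a b t
    by (rule phi_tensor_add[OF f])
  show "\<phi> (tens t f) (tens (a + b) g) = \<phi> (tens t f) (tens a g) + \<phi> (tens t f) (tens b g)" for a b t
    using phi_tensor_add[OF g] phi_sym by metis
  show "\<phi> (tens (br u s) f) (tens t g) = \<phi> (tens s f) (tens (br u t) g)" for u s t
    using phi_tensor_tensor_one_cyclic[OF f g, of u s t] phi_tensor_one_zero[OF On_mult_On]
      br_anticomm[of t u] phi_tensor_uminus[OF g, of "br u t" "tens s f"] phi_sym[of "tens s f"]
    by (simp add: eq_neg_iff_add_eq_0)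
qed

lemma phi_tensor_zero:
  assumes f: "f \<in> On n p" and Y: "Y \<in> L"
  shows "\<phi> (tens x f) Y = 0"
  using Y
proof (induction Y rule: L_carrier_induct)
  case zero
  show ?case
    using phi_L_zero[of "tens x f"] by (simp add: phi_sym)
next
  case (add Y Z)
  then show ?case
    using phi_add[of Y Z "tens x f"] by (simp add: phi_sym)
qed (simp_all add: phi_tensor_tensor_zero phi_tensor_der_zero f)

lemma phi_eq_der_part_left:
  assumes X: "X \<in> L" and Y: "Y \<in> L"
  shows "\<phi> X Y = \<phi> (der_elem (snd X)) Y"
  using X
proof (induction X rule: L_carrier_induct)
  case (add X1 X2)
  then have "\<phi> (der_elem (snd (L_add X1 X2))) Y = \<phi> (der_elem (snd X1)) Y + \<phi> (der_elem (snd X2)) Y"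
    using phi_add[OF der_elem_L[OF snd_L] der_elem_L[OF snd_L]] by (simp add: snd_L_add der_elem_add)
  with add show ?case
    by (simp add: phi_add)
qed (simp_all add: snd_tensor_elem snd_der_elem phi_tensor_zero Y phi_L_zero)

lemma phi_eq_der_parts:
  assumes X: "X \<in> L" and Y: "Y \<in> L"
  shows "\<phi> X Y = \<phi> (der_elem (snd X)) (der_elem (snd Y))"
proof -
  have "\<phi> X Y = \<phi> Y (der_elem (snd X))"
    using phi_eq_der_part_left[OF X Y] phi_sym by simp
  also have "\<dots> = \<phi> (der_elem (snd X)) (der_elem (snd Y))"
    using phi_eq_der_part_left[OF Y der_elem_L[OF snd_L[OF X]]] phi_sym by simp
  finally show ?thesis .
qed

end

section \<open>Pulling back commutative cocycles\<close>

definition pullback_form :: "'a set \<Rightarrow> ('a \<Rightarrow> 'b) \<Rightarrow> ('b \<Rightarrow> 'b \<Rightarrow> 'k::field) \<Rightarrow> 'a \<Rightarrow> 'a \<Rightarrow> 'k" where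
  "pullback_form A h \<psi> = (\<lambda>x y. if x \<in> A \<and> y \<in> A then \<psi> (h x) (h y) else 0)"

lemma pullback_form_Z2comm:
  assumes \<psi>: "\<psi> \<in> Z2comm B add' sc' br'"
    and maps: "\<And>x. x \<in> A \<Longrightarrow> h x \<in> B"
    and closed: "\<And>x y. x \<in> A \<Longrightarrow> y \<in> A \<Longrightarrow> add x y \<in> A"
      "\<And>c x. x \<in> A \<Longrightarrow> sc c x \<in> A"
      "\<And>x y. x \<in> A \<Longrightarrow> y \<in> A \<Longrightarrow> br x y \<in> A"
    and hom: "\<And>x y. x \<in> A \<Longrightarrow> y \<in> A \<Longrightarrow> h (add x y) = add' (h x) (h y)"
      "\<And>c x. x \<in> A \<Longrightarrow> h (sc c x) = sc' c (h x)"
      "\<And>x y. x \<in> A \<Longrightarrow> y \<in> A \<Longrightarrow> h (br x y) = br' (h x) (h y)"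
  shows "pullback_form A h \<psi> \<in> Z2comm A add sc br"
  using \<psi> unfolding Z2comm_def pullback_form_def
  by (simp add: maps closed hom)

lemma pullback_form_plus:
  "pullback_form A h (\<lambda>x y. \<phi> x y + \<psi> x y) = (\<lambda>x y. pullback_form A h \<phi> x y + pullback_form A h \<psi> x y)"
  by (simp add: pullback_form_def fun_eq_iff)

lemma pullback_form_scale:
  "pullback_form A h (\<lambda>x y. c * \<phi> x y) = (\<lambda>x y. c * pullback_form A h \<phi> x y)"
  by (simp add: pullback_form_def fun_eq_iff)

context current_algebra
begin

lemma Z2comm_restrict_D:
  "\<phi> \<in> Z2comm L L_add (L_scale sm) LB \<Longrightarrow>
    pullback_form D der_elem \<phi> \<in> Z2comm D der_add der_scale der_br"
  by (rule pullback_form_Z2comm)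
    (auto intro: der_elem_L der_add_D der_scale_D der_br_D simp: der_elem_add der_elem_scale L_br_der_der)

lemma Z2comm_pullback_snd:
  "\<psi> \<in> Z2comm D der_add der_scale der_br \<Longrightarrow>
    pullback_form L snd \<psi> \<in> Z2comm L L_add (L_scale sm) LB"
  by (rule pullback_form_Z2comm)
    (auto intro: snd_L L_add_L L_scale_L L_br_L simp: snd_L_add snd_L_scale snd_L_br)

lemma forms_iso_Z2comm_D: "forms_iso (Z2comm L L_add (L_scale sm) LB) (Z2comm D der_add der_scale der_br)"
proof -
  have "bij_betw (pullback_form D der_elem) (Z2comm L L_add (L_scale sm) LB) (Z2comm D der_add der_scale der_br)"
  proof (rule bij_betw_byWitness[where f' = "pullback_form L snd"])
    show "\<forall>\<phi>\<in>Z2comm L L_add (L_scale sm) LB. pullback_form L snd (pullback_form D der_elem \<phi>) = \<phi>"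
    proof
      fix \<phi> assume "\<phi> \<in> Z2comm L L_add (L_scale sm) LB"
      then interpret current_cocycle sm br n p D \<phi>
        by unfold_locales
      show "pullback_form L snd (pullback_form D der_elem \<phi>) = \<phi>"
      proof (intro ext)
        fix X Y
        show "pullback_form L snd (pullback_form D der_elem \<phi>) X Y = \<phi> X Y"
          using phi_outside[of X Y] phi_eq_der_parts[of X Y] snd_L[of X] snd_L[of Y]
          by (auto simp: pullback_form_def)
      qed
    qed
    show "\<forall>\<psi>\<in>Z2comm D der_add der_scale der_br. pullback_form D der_elem (pullback_form L snd \<psi>) = \<psi>"
      by (auto simp: pullback_form_def fun_eq_iff der_elem_L snd_der_elem Z2comm_def)
  qed (auto intro: Z2comm_restrict_D Z2comm_pullback_snd)
  then show ?thesis
    unfolding forms_iso_def using pullback_form_plus pullback_form_scale by blast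
qed

end

theorem theorem6p1:
  fixes p n :: nat
    and D :: "(((nat \<Rightarrow> nat) \<Rightarrow> 'k::field) \<Rightarrow> ((nat \<Rightarrow> nat) \<Rightarrow> 'k)) set"
    and sm :: "'k \<Rightarrow> 's::ab_group_add \<Rightarrow> 's"
    and br :: "'s \<Rightarrow> 's \<Rightarrow> 's"
  assumes "CHAR('k) = p" and "p > 3"
    and "n \<ge> 1"
    and "lie_subalgebra_Wn n p D"
    and "On_D_simple n p D"
    and "simple_lie_algebra sm br" and "finite_dim sm"
  shows "forms_iso
           (Z2comm (L_carrier n p D) L_add (L_scale sm) (L_br n p sm br))
           (Z2comm D der_add der_scale der_br)"
proof -
  have "(2::'k) \<noteq> 0"
  proof
    assume "(2::'k) = 0"
    then have "CHAR('k) dvd 2"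
      using of_nat_eq_0_iff_char_dvd[where 'a = 'k, of 2] by simp
    then show False
      using assms(1,2) by (auto dest: dvd_imp_le)
  qed
  with assms interpret current_algebra sm br n p D
    by (simp add: current_algebra_def current_algebra_axioms_def simple_lie_algebra_perfect)
  show ?thesis
    by (rule forms_iso_Z2comm_D)
qed

end
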